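(* Suppose that every Lipschitz quaternion $(a,b,c,d)=a+bi+cj+dk$ with integer coordinates all $>1$ can be written as $p+q$ where $p$ and $q$ are Hurwitz primes lying in $Q=\{(a,b,c,d): a,b,c,d>0\}$. Then at least one of the sequences $k^2+k+1$ $(k=0,1,2,\dots)$ and $k^2+k+3$ $(k=0,1,2,\dots)$ contains infinitely many rational primes.
   Context: Quaternions $a+bi+cj+dk$ are written $(a,b,c,d)$, with norm $N(a,b,c,d)=a^2+b^2+c^2+d^2$. Lipschitz integers are quaternions $(a,b,c,d)$ with $a,b,c,d\in\mathbb{Z}$. Hurwitz integers (in the sense of this paper) are quaternions of the form $(a+\tfrac12,b+\tfrac12,c+\tfrac12,d+\tfrac12)$ with $a,b,c,d\in\mathbb{Z}$ (all four coordinates half-odd-integers). A quaternion prime is a Lipschitz or Hurwitz integer whose norm is a rational prime; a Hurwitz prime is a quaternion prime that is a Hurwitz integer. $Q$ denotes the set of quaternions with all four coordinates strictly positive. *)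

theory Defs
  imports Complex_Main "HOL-Computational_Algebra.Primes"
begin

type_synonym quat = "real \<times> real \<times> real \<times> real"

definition qadd :: "quat \<Rightarrow> quat \<Rightarrow> quat" where
  "qadd x y = (case x of (a,b,c,d) \<Rightarrow> case y of (a',b',c',d') \<Rightarrow> (a+a', b+b', c+c', d+d'))"

definition qnorm :: "quat \<Rightarrow> real" where
  "qnorm x = (case x of (a,b,c,d) \<Rightarrow> a^2 + b^2 + c^2 + d^2)"

definition lipschitz :: "quat \<Rightarrow> bool" where
  "lipschitz x = (case x of (a,b,c,d) \<Rightarrow> a \<in> \<int> \<and> b \<in> \<int> \<and> c \<in> \<int> \<and> d \<in> \<int>)"

text \<open>Hurwitz integers in the sense of the paper: all four coordinates half-odd-integers.\<close>
definition hurwitz :: "quat \<Rightarrow> bool" where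
  "hurwitz x = (case x of (a,b,c,d) \<Rightarrow>
     a - 1/2 \<in> \<int> \<and> b - 1/2 \<in> \<int> \<and> c - 1/2 \<in> \<int> \<and> d - 1/2 \<in> \<int>)"

definition quat_prime :: "quat \<Rightarrow> bool" where
  "quat_prime x = ((lipschitz x \<or> hurwitz x) \<and> (\<exists>p::nat. prime p \<and> qnorm x = real p))"

definition hurwitz_prime :: "quat \<Rightarrow> bool" where
  "hurwitz_prime x = (quat_prime x \<and> hurwitz x)"

definition inQ :: "quat \<Rightarrow> bool" where
  "inQ x = (case x of (a,b,c,d) \<Rightarrow> a > 0 \<and> b > 0 \<and> c > 0 \<and> d > 0)"

end

theory Submission
  imports Defs
begin

text \<open>Write the Lipschitz quaternion (2,2,2,x+1) as p + q with Hurwitz primes p, q in Q. The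
  first three coordinates of p and q are 1/2 or 3/2, so with k + l = x their norms are
  k^2+k+c and l^2+l+8-c for an odd c, where up to swapping p and q we have c \<in> {1,3}. If both
  sequences had only finitely many prime values, all at indices below K, choose x > 2K divisible
  by k^2-k+5 and k^2-k+7 for all k < K. Then k < K, and the identity
  l^2+l+c' = (k^2-k+c') + x(l-k+1) makes the other norm a proper multiple of k^2-k+c'.\<close>

lemma shifted_value_not_prime:
  fixes k l x c :: nat
  assumes dvd: "k^2 - k + c dvd x" and "k + l = x" and "k < l" and "c \<ge> 2"
  shows "\<not> prime (l^2 + l + c)"
proof
  assume pr: "prime (l^2 + l + c)"
  define g where "g = k^2 - k + c"
  have kk: "k \<le> k^2" by (simp add: power2_eq_square)
  have "int (g + x * (l - k + 1)) = int g + int x * (int l - int k + 1)"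
    unfolding of_nat_add of_nat_mult using \<open>k < l\<close> by (simp add: of_nat_diff)
  also have "\<dots> = int (l^2 + l + c)"
  proof -
    have "int g = int k^2 - int k + int c" using kk by (simp add: g_def of_nat_diff)
    then show ?thesis
      unfolding \<open>k + l = x\<close>[symmetric] by (simp add: power2_eq_square algebra_simps)
  qed
  finally have "int (l^2 + l + c) = int (g + x * (l - k + 1))" ..
  then have eq: "l^2 + l + c = g + x * (l - k + 1)"
    by linarith
  have "g dvd l^2 + l + c"
    unfolding eq using dvd by (simp add: g_def)
  with pr have "g = 1 \<or> g = l^2 + l + c"
    by (simp add: prime_nat_iff)
  moreover have "g \<ge> 2" using \<open>c \<ge> 2\<close> kk by (simp add: g_def)
  moreover have "x * (l - k + 1) > 0" using \<open>k + l = x\<close> \<open>k < l\<close> by simp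
  ultimately show False using eq by linarith
qed

lemma exists_common_multiple_gt:
  fixes f :: "nat \<Rightarrow> nat"
  assumes "\<forall>i<K. f i > 0"
  shows "\<exists>x > N. \<forall>i<K. f i dvd x"
proof (intro exI conjI allI impI)
  define P where "P = (\<Prod>i<K. f i)"
  have "P > 0" using assms by (simp add: P_def prod_pos)
  then have "(N + 1) * 1 \<le> (N + 1) * P" by (intro mult_le_mono2) simp
  then show "(N + 1) * P > N" by simp
  show "f i dvd (N + 1) * P" if "i < K" for i
    using that by (simp add: P_def dvd_prodI)
qed

lemma half_odd_split:
  fixes a b :: real and n :: nat
  assumes "a - 1/2 \<in> \<int>" "a > 0" "b > 0" "a + b = real n + 1"
  shows "\<exists>j l. j + l = n \<and> a = real j + 1/2 \<and> b = real l + 1/2"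
proof -
  obtain z :: int where z: "a - 1/2 = of_int z"
    using assms(1) by (auto elim: Ints_cases)
  have "0 \<le> z" "z \<le> int n" using z assms by linarith+
  then show ?thesis using z assms
    by (intro exI[of _ "nat z"] exI[of _ "n - nat z"]) (auto simp: of_nat_diff)
qed

lemma qnorm_half_odd:
  "qnorm (real a + 1/2, real b + 1/2, real c + 1/2, real d + 1/2)
     = real (a^2 + a + b^2 + b + c^2 + c + d^2 + d + 1)"
  by (simp add: qnorm_def power2_eq_square algebra_simps)

lemma bit_square: "(z::nat) \<le> 1 \<Longrightarrow> z^2 = z"
  by (cases z) auto

text \<open>Here m and m' count the first three coordinates of p and of q, respectively, equal to 3/2.\<close>

lemma qnorms_of_split:
  fixes x :: nat
  assumes "hurwitz p" "inQ p" "hurwitz q" "inQ q"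
    and sum: "qadd p q = (2, 2, 2, real x + 1)"
  shows "\<exists>j l m m'. j + l = x \<and> m + m' = 3
           \<and> qnorm p = real (j^2 + j + 1 + 2 * m) \<and> qnorm q = real (l^2 + l + 1 + 2 * m')"
proof -
  obtain a1 a2 a3 a4 b1 b2 b3 b4 where
    p: "p = (a1, a2, a3, a4)" and q: "q = (b1, b2, b3, b4)"
    by (cases p, cases q) auto
  have sums: "a1 + b1 = real 1 + 1" "a2 + b2 = real 1 + 1" "a3 + b3 = real 1 + 1"
    "a4 + b4 = real x + 1"
    using sum by (simp_all add: qadd_def p q)
  from assms(1-4) have h: "a1 - 1/2 \<in> \<int>" "a2 - 1/2 \<in> \<int>" "a3 - 1/2 \<in> \<int>" "a4 - 1/2 \<in> \<int>"
    and pos: "a1 > 0" "a2 > 0" "a3 > 0" "a4 > 0" "b1 > 0" "b2 > 0" "b3 > 0" "b4 > 0"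
    by (simp_all add: hurwitz_def inQ_def p q)
  obtain z1 w1 where "z1 + w1 = 1" "a1 = real z1 + 1/2" "b1 = real w1 + 1/2"
    using half_odd_split[OF h(1) pos(1,5) sums(1)] by blast
  moreover obtain z2 w2 where "z2 + w2 = 1" "a2 = real z2 + 1/2" "b2 = real w2 + 1/2"
    using half_odd_split[OF h(2) pos(2,6) sums(2)] by blast
  moreover obtain z3 w3 where "z3 + w3 = 1" "a3 = real z3 + 1/2" "b3 = real w3 + 1/2"
    using half_odd_split[OF h(3) pos(3,7) sums(3)] by blast
  moreover obtain j l where "j + l = x" "a4 = real j + 1/2" "b4 = real l + 1/2"
    using half_odd_split[OF h(4) pos(4,8) sums(4)] by blast
  ultimately have bits: "z1 + w1 = 1" "z2 + w2 = 1" "z3 + w3 = 1" and "j + l = x"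
    and p': "p = (real z1 + 1/2, real z2 + 1/2, real z3 + 1/2, real j + 1/2)"
    and q': "q = (real w1 + 1/2, real w2 + 1/2, real w3 + 1/2, real l + 1/2)"
    by (simp_all add: p q)
  show ?thesis
  proof (intro exI conjI)
    show "j + l = x" by fact
    show "z1 + z2 + z3 + (w1 + w2 + w3) = 3" using bits by simp
    show "qnorm p = real (j^2 + j + 1 + 2 * (z1 + z2 + z3))"
      unfolding p' qnorm_half_odd using bits by (simp add: bit_square)
    show "qnorm q = real (l^2 + l + 1 + 2 * (w1 + w2 + w3))"
      unfolding q' qnorm_half_odd using bits by (simp add: bit_square)
  qed
qed

lemma prime_values_of_split:
  fixes x :: nat
  assumes "hurwitz_prime p" "inQ p" "hurwitz_prime q" "inQ q"
    and "qadd p q = (2, 2, 2, real x + 1)"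
  shows "\<exists>k l c. k + l = x \<and> c \<in> {1, 3} \<and> prime (k^2 + k + c) \<and> prime (l^2 + l + (8 - c))"
proof -
  obtain Np Nq :: nat where
    Np: "prime Np" "qnorm p = real Np" and Nq: "prime Nq" "qnorm q = real Nq"
    using assms(1,3) unfolding hurwitz_prime_def quat_prime_def by blast
  obtain j l m m' where jl: "j + l = x" and mm: "m + m' = 3"
    and "qnorm p = real (j^2 + j + 1 + 2 * m)" and "qnorm q = real (l^2 + l + 1 + 2 * m')"
    using qnorms_of_split assms unfolding hurwitz_prime_def by blast
  with Np Nq have primes: "prime (j^2 + j + 1 + 2 * m)" "prime (l^2 + l + 1 + 2 * m')"
    by (metis of_nat_eq_iff)+
  consider "m \<le> 1" | "m' \<le> 1" using mm by linarith
  then show ?thesis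
  proof cases
    case 1
    then have "1 + 2 * m \<in> {1, 3}" "8 - (1 + 2 * m) = 1 + 2 * m'" using mm by auto
    then have "j + l = x \<and> 1 + 2 * m \<in> {1, 3} \<and> prime (j^2 + j + (1 + 2 * m))
        \<and> prime (l^2 + l + (8 - (1 + 2 * m)))"
      using jl primes by (simp add: add.assoc)
    then show ?thesis by blast
  next
    case 2
    then have "1 + 2 * m' \<in> {1, 3}" "8 - (1 + 2 * m') = 1 + 2 * m" using mm by auto
    then have "l + j = x \<and> 1 + 2 * m' \<in> {1, 3} \<and> prime (l^2 + l + (1 + 2 * m'))
        \<and> prime (j^2 + j + (8 - (1 + 2 * m')))"
      using jl primes by (simp add: add.assoc add.commute)
    then show ?thesis by blast
  qed
qed

theorem mainTheorem3:
  assumes "\<forall>a b c d :: int. a > 1 \<and> b > 1 \<and> c > 1 \<and> d > 1 \<longrightarrow>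
     (\<exists>p q. hurwitz_prime p \<and> inQ p \<and> hurwitz_prime q \<and> inQ q \<and>
        qadd p q = (of_int a, of_int b, of_int c, of_int d))"
  shows "infinite {k::nat. prime (k^2 + k + 1)} \<or> infinite {k::nat. prime (k^2 + k + 3)}"
proof (rule ccontr)
  assume "\<not> ?thesis"
  then have "finite ({k. prime (k^2 + k + 1)} \<union> {k::nat. prime (k^2 + k + 3)})" by simp
  then obtain K where "\<forall>k \<in> {k. prime (k^2 + k + 1)} \<union> {k::nat. prime (k^2 + k + 3)}. k < K"
    by (auto simp: finite_nat_set_iff_bounded)
  then have K: "\<And>k c. c \<in> {1, 3::nat} \<Longrightarrow> prime (k^2 + k + c) \<Longrightarrow> k < K"
    by auto
  obtain x where "2 * K < x" and dvd: "\<forall>k<K. (k^2 - k + 5) * (k^2 - k + 7) dvd x"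
    using exists_common_multiple_gt[of K "\<lambda>k. (k^2 - k + 5) * (k^2 - k + 7)" "2 * K"]
    by auto
  have "\<exists>p q. hurwitz_prime p \<and> inQ p \<and> hurwitz_prime q \<and> inQ q \<and>
      qadd p q = (2, 2, 2, real x + 1)"
    using assms[rule_format, of 2 2 2 "int x + 1"] \<open>2 * K < x\<close> by simp
  then obtain p q where pq: "hurwitz_prime p" "inQ p" "hurwitz_prime q" "inQ q"
    "qadd p q = (2, 2, 2, real x + 1)"
    by blast
  obtain k l c where "k + l = x" and c: "c \<in> {1, 3}" and "prime (k^2 + k + c)"
    and "prime (l^2 + l + (8 - c))"
    using prime_values_of_split[OF pq] by blast
  have "k < K" using K[OF c \<open>prime (k^2 + k + c)\<close>] .
  have "k^2 - k + (8 - c) dvd (k^2 - k + 5) * (k^2 - k + 7)" using c by auto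
  then have "k^2 - k + (8 - c) dvd x" using dvd \<open>k < K\<close> dvd_trans by blast
  moreover have "k < l" using \<open>k + l = x\<close> \<open>k < K\<close> \<open>2 * K < x\<close> by linarith
  moreover have "8 - c \<ge> 2" using c by auto
  ultimately have "\<not> prime (l^2 + l + (8 - c))"
    using \<open>k + l = x\<close> by (intro shifted_value_not_prime)
  then show False using \<open>prime (l^2 + l + (8 - c))\<close> by contradiction
qed

end
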